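(* Let $d\ge 2$, $c\ge 0$ and $\nu_l=\sqrt{(l+\tfrac d2-1)^2+c^2}$ for integers $l\ge 0$. For every $w>0$ the equation $$\sqrt{h^2-1}-\operatorname{arcsec}(h)=\frac{\pi}{w}$$ has a unique solution $h=h(w)>1$. Moreover, for any sequence of pairs of integers $(l,k)$ with $l\ge0$, $k\ge1$, $l,k\to\infty$ and $l/k\to w>0$, we have $$\frac{j_{\nu_l,k}}{\nu_l}\to h(w).$$
   Context: $J_\nu$ denotes the Bessel function of the first kind of order $\nu$, and $j_{\nu,k}$ denotes its $k$-th positive zero. $\operatorname{arcsec}(z)=\arccos(1/z)$ for $z\ge1$. *)

theory Defs
  imports "HOL-Analysis.Analysis"
begin

definition bessel_J :: "real \<Rightarrow> real \<Rightarrow> real" where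
  "bessel_J nu x = (\<Sum>m. (-1) ^ m / (fact m * Gamma (real m + nu + 1)) * (x / 2) powr (2 * real m + nu))"

definition bessel_zero :: "real \<Rightarrow> nat \<Rightarrow> real" where
  "bessel_zero nu k = (THE x. 0 < x \<and> bessel_J nu x = 0 \<and>
      finite {y. 0 < y \<and> y < x \<and> bessel_J nu y = 0} \<and>
      card {y. 0 < y \<and> y < x \<and> bessel_J nu y = 0} = k - 1)"

definition arcsec :: "real \<Rightarrow> real" where
  "arcsec z = arccos (1 / z)"

end

(*
  J_nu(x) = (x/2)^nu G(x^2/4) with G entire, and u(x) = x^(nu+1/2) G(x^2/4) solves
  u'' + q u = 0 with q(x) = 1 - (nu^2 - 1/4)/x^2, so the zeros of J_nu are those of u.
  Sturm comparison with sin (s (x - a)) shows: where m <= q <= M, consecutive zeros of u are at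
  least pi/sqrt M apart, and every interval of length pi/sqrt m contains a zero.
  Since q(nu t) is close to 1 - 1/t^2, cutting [nu, nu H] into short pieces and summing gives
    #{zeros of J_nu in (0, nu H)} / nu --> (1/pi) * integral_1^H sqrt (1 - 1/t^2) dt = F(H)/pi
  as nu --> infinity, where F(h) = sqrt (h^2 - 1) - arcsec h (below nu there are at most two
  zeros). F increases strictly from F(1) = 0 to infinity, so h(w) is the unique solution of
  F(h) = pi/w, and j_{nu,k}/nu --> h whenever nu --> infinity and k/nu --> F(h)/pi.
  Finally nu_l - l is bounded, so k/nu_l --> 1/w.
*)

theory Submission
  imports Defs
begin

section \<open>The Bessel series and the normal form of Bessel's equation\<close>

definition bessel_coeff :: "real \<Rightarrow> nat \<Rightarrow> real" where
  "bessel_coeff \<nu> n = (-1) ^ n / (fact n * Gamma (real n + \<nu> + 1))"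

lemma bessel_coeff_Suc:
  assumes "\<nu> \<ge> 0"
  shows "bessel_coeff \<nu> (Suc n) = - bessel_coeff \<nu> n / ((real n + 1) * (real n + \<nu> + 1))"
proof -
  have "real n + \<nu> + 1 \<notin> \<int>\<^sub>\<le>\<^sub>0"
    using assms by (auto elim!: nonpos_Ints_cases)
  then have "Gamma (real (Suc n) + \<nu> + 1) = (real n + \<nu> + 1) * Gamma (real n + \<nu> + 1)"
    using Gamma_plus1[of "real n + \<nu> + 1"] by (simp add: add_ac)
  moreover have "Gamma (real n + \<nu> + 1) > 0"
    using assms by (intro Gamma_real_pos) simp
  ultimately show ?thesis
    using assms by (simp add: bessel_coeff_def fact_Suc field_simps)
qed

lemma bessel_coeff_0: "\<nu> \<ge> 0 \<Longrightarrow> bessel_coeff \<nu> 0 > 0"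
  by (simp add: bessel_coeff_def Gamma_real_pos add.commute)

lemma summable_bessel_coeff:
  assumes "\<nu> \<ge> 0"
  shows "summable (\<lambda>n. bessel_coeff \<nu> n * t ^ n)"
proof (rule summable_ratio_test[where c = "1/2" and N = "nat \<lceil>2 * \<bar>t\<bar>\<rceil>"])
  fix n assume n: "n \<ge> nat \<lceil>2 * \<bar>t\<bar>\<rceil>"
  have "2 * \<bar>t\<bar> \<le> real n + 1"
    using n by linarith
  also have "\<dots> \<le> (real n + 1) * (real n + \<nu> + 1)"
    using assms by (simp add: algebra_simps)
  finally have "\<bar>t\<bar> / ((real n + 1) * (real n + \<nu> + 1)) \<le> 1/2"
    using assms by (simp add: divide_le_eq)
  then have "\<bar>t\<bar> / ((real n + 1) * (real n + \<nu> + 1)) * norm (bessel_coeff \<nu> n * t ^ n)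
      \<le> 1/2 * norm (bessel_coeff \<nu> n * t ^ n)"
    by (rule mult_right_mono) simp
  moreover have "norm (bessel_coeff \<nu> (Suc n) * t ^ Suc n)
      = \<bar>t\<bar> / ((real n + 1) * (real n + \<nu> + 1)) * norm (bessel_coeff \<nu> n * t ^ n)"
    using assms by (simp add: bessel_coeff_Suc abs_mult power_abs abs_divide field_simps)
  ultimately show "norm (bessel_coeff \<nu> (Suc n) * t ^ Suc n) \<le> 1/2 * norm (bessel_coeff \<nu> n * t ^ n)"
    by simp
qed simp

definition bessel_ser :: "real \<Rightarrow> nat \<Rightarrow> real \<Rightarrow> real" where
  "bessel_ser \<nu> j t = (\<Sum>n. (diffs ^^ j) (bessel_coeff \<nu>) n * t ^ n)"

lemma summable_bessel_ser:
  "\<nu> \<ge> 0 \<Longrightarrow> summable (\<lambda>n. (diffs ^^ j) (bessel_coeff \<nu>) n * t ^ n)"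
  by (induction j arbitrary: t) (auto intro: summable_bessel_coeff termdiff_converges_all)

lemma bessel_ser_deriv:
  "\<nu> \<ge> 0 \<Longrightarrow> (bessel_ser \<nu> j has_real_derivative bessel_ser \<nu> (Suc j) t) (at t)"
  unfolding bessel_ser_def[abs_def] funpow.simps o_apply
  by (rule termdiffs_strong_converges_everywhere) (rule summable_bessel_ser)

lemma bessel_ser_0_pos: "\<nu> \<ge> 0 \<Longrightarrow> bessel_ser \<nu> 0 0 > 0"
  by (simp add: bessel_ser_def bessel_coeff_0)

lemma bessel_ser_ode:
  assumes "\<nu> \<ge> 0"
  shows "t * bessel_ser \<nu> 2 t + (\<nu> + 1) * bessel_ser \<nu> 1 t + bessel_ser \<nu> 0 t = 0"
proof -
  let ?a = "bessel_coeff \<nu>"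
  have sums: "(\<lambda>n. (diffs ^^ j) ?a n * t ^ n) sums bessel_ser \<nu> j t" for j
    unfolding bessel_ser_def using summable_bessel_ser[OF assms] by (rule summable_sums)
  have "(\<lambda>n. t * (diffs (diffs ?a) n * t ^ n)) sums (t * bessel_ser \<nu> 2 t)"
    using sums_mult[OF sums[of 2]] by (simp add: numeral_2_eq_2)
  then have "(\<lambda>n. real (Suc n) * diffs ?a (Suc n) * t ^ Suc n) sums (t * bessel_ser \<nu> 2 t)"
    by (simp add: diffs_def algebra_simps)
  then have "(\<lambda>n. real n * diffs ?a n * t ^ n) sums (t * bessel_ser \<nu> 2 t)"
    by (subst (asm) sums_Suc_iff) simp
  moreover have "(\<lambda>n. (\<nu> + 1) * (diffs ?a n * t ^ n)) sums ((\<nu> + 1) * bessel_ser \<nu> 1 t)"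
    using sums_mult[OF sums[of 1]] by simp
  ultimately have "(\<lambda>n. real n * diffs ?a n * t ^ n + (\<nu> + 1) * (diffs ?a n * t ^ n) + ?a n * t ^ n)
      sums (t * bessel_ser \<nu> 2 t + (\<nu> + 1) * bessel_ser \<nu> 1 t + bessel_ser \<nu> 0 t)"
    using sums[of 0] by (intro sums_add) simp_all
  moreover have "(real n + \<nu> + 1) * diffs ?a n + ?a n = 0" for n
    using assms by (simp add: diffs_def bessel_coeff_Suc add.commute)
  then have "real n * diffs ?a n * t ^ n + (\<nu> + 1) * (diffs ?a n * t ^ n) + ?a n * t ^ n = 0" for n
    by (metis (no_types, lifting) distrib_right mult.assoc mult_zero_left add.assoc)
  ultimately show ?thesis
    using sums_unique2[OF _ sums_zero] by simp
qed

lemma bessel_J_eq_bessel_ser: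
  assumes "\<nu> \<ge> 0" "x > 0"
  shows "bessel_J \<nu> x = (x / 2) powr \<nu> * bessel_ser \<nu> 0 (x^2 / 4)"
proof -
  have "(x / 2) powr (2 * real m + \<nu>) = (x / 2) powr \<nu> * (x / 2) ^ (2 * m)" for m
    using assms powr_realpow[of "x / 2" "2 * m"] by (simp add: powr_add)
  then have "(-1) ^ m / (fact m * Gamma (real m + \<nu> + 1)) * (x / 2) powr (2 * real m + \<nu>)
      = (x / 2) powr \<nu> * (bessel_coeff \<nu> m * (x^2 / 4) ^ m)" for m
    by (simp add: bessel_coeff_def power_mult power_divide)
  then show ?thesis
    unfolding bessel_J_def bessel_ser_def
    by (simp add: suminf_mult[OF summable_bessel_coeff[OF assms(1)]])
qed

lemma bessel_ser_sq_deriv: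
  assumes "\<nu> \<ge> 0"
  shows "((\<lambda>x. bessel_ser \<nu> j (x^2 / 4)) has_real_derivative x / 2 * bessel_ser \<nu> (Suc j) (x^2 / 4)) (at x)"
proof -
  have "((\<lambda>x. bessel_ser \<nu> j (x^2 / 4)) has_real_derivative bessel_ser \<nu> (Suc j) (x^2 / 4) * (2 * x / 4)) (at x)"
    by (rule DERIV_chain2[OF bessel_ser_deriv[OF assms]]) (auto intro!: derivative_eq_intros)
  then show ?thesis
    by (simp add: algebra_simps)
qed

lemma has_real_derivative_powr_div:
  "x > 0 \<Longrightarrow> ((\<lambda>x. x powr p) has_real_derivative p / x * x powr p) (at x)"
  using has_real_derivative_powr[of x p] by (simp add: powr_diff)

text \<open>\<open>bessel_u \<nu> x = 2\<^sup>\<nu> \<surd>x J\<^sub>\<nu>(x)\<close> for \<open>x > 0\<close>: the Liouville normal form of Bessel's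
  equation, \<open>u'' + bessel_q \<nu> u = 0\<close>.\<close>
definition bessel_u :: "real \<Rightarrow> real \<Rightarrow> real" where
  "bessel_u \<nu> x = x powr (\<nu> + 1/2) * bessel_ser \<nu> 0 (x^2 / 4)"

definition bessel_u' :: "real \<Rightarrow> real \<Rightarrow> real" where
  "bessel_u' \<nu> x = x powr (\<nu> + 1/2) *
     ((\<nu> + 1/2) / x * bessel_ser \<nu> 0 (x^2 / 4) + x / 2 * bessel_ser \<nu> 1 (x^2 / 4))"

definition bessel_q :: "real \<Rightarrow> real \<Rightarrow> real" where
  "bessel_q \<nu> x = 1 - (\<nu>^2 - 1/4) / x^2"

lemma bessel_u_deriv:
  assumes "\<nu> \<ge> 0" "x > 0"
  shows "(bessel_u \<nu> has_real_derivative bessel_u' \<nu> x) (at x)"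
  unfolding bessel_u_def[abs_def]
  by (rule DERIV_cong[OF DERIV_mult'[OF has_real_derivative_powr_div[OF assms(2)]
        bessel_ser_sq_deriv[OF assms(1)]]])
    (simp add: bessel_u'_def algebra_simps)

lemma bessel_u'_deriv:
  assumes "\<nu> \<ge> 0" "x > 0"
  shows "(bessel_u' \<nu> has_real_derivative - bessel_q \<nu> x * bessel_u \<nu> x) (at x)"
proof -
  let ?p = "\<nu> + 1/2"
  let ?G = "\<lambda>j. bessel_ser \<nu> j (x^2 / 4)"
  have "((\<lambda>x. bessel_ser \<nu> 0 (x^2 / 4)) has_real_derivative x / 2 * ?G 1) (at x)"
    and "((\<lambda>x. bessel_ser \<nu> 1 (x^2 / 4)) has_real_derivative x / 2 * ?G 2) (at x)"
    using bessel_ser_sq_deriv[OF assms(1), of 0 x] bessel_ser_sq_deriv[OF assms(1), of 1 x]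
    by (simp_all add: numeral_2_eq_2)
  then have deriv: "(bessel_u' \<nu> has_real_derivative
      x powr ?p * (?p / x * (x / 2 * ?G 1) + - (?p / x^2) * ?G 0 + (x / 2 * (x / 2 * ?G 2) + 1/2 * ?G 1))
      + ?p / x * x powr ?p * (?p / x * ?G 0 + x / 2 * ?G 1)) (at x)"
    unfolding bessel_u'_def[abs_def]
    using assms
    by (intro DERIV_mult' has_real_derivative_powr_div DERIV_add)
      (auto intro!: derivative_eq_intros simp: power2_eq_square field_simps)
  have ode: "x / 2 * (x / 2 * ?G 2) + (\<nu> + 1) * ?G 1 = - ?G 0"
    using bessel_ser_ode[OF assms(1), of "x^2 / 4"] by (simp add: power2_eq_square algebra_simps)
  have "x powr ?p * (?p / x * (x / 2 * ?G 1) + - (?p / x^2) * ?G 0 + (x / 2 * (x / 2 * ?G 2) + 1/2 * ?G 1))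
      + ?p / x * x powr ?p * (?p / x * ?G 0 + x / 2 * ?G 1)
      = x powr ?p * ((\<nu>^2 - 1/4) / x^2 * ?G 0 + (x / 2 * (x / 2 * ?G 2) + (\<nu> + 1) * ?G 1))"
    using assms by (simp add: field_simps power2_eq_square)
  also have "\<dots> = - bessel_q \<nu> x * bessel_u \<nu> x"
    unfolding ode by (simp add: bessel_q_def bessel_u_def algebra_simps)
  finally show ?thesis
    using deriv by simp
qed

lemma bessel_J_eq_0_iff:
  assumes "\<nu> \<ge> 0" "x > 0"
  shows "bessel_J \<nu> x = 0 \<longleftrightarrow> bessel_u \<nu> x = 0"
  using assms by (simp add: bessel_J_eq_bessel_ser bessel_u_def)

lemma bessel_u_pos_near_0:
  assumes "\<nu> \<ge> 0"
  obtains e where "e > 0" "\<And>x. 0 < x \<Longrightarrow> x \<le> e \<Longrightarrow> bessel_u \<nu> x > 0"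
proof -
  have "isCont (\<lambda>x. bessel_ser \<nu> 0 (x^2 / 4)) 0"
    using bessel_ser_sq_deriv[OF assms] by (rule DERIV_isCont)
  then have "eventually (\<lambda>x. bessel_ser \<nu> 0 (x^2 / 4) > 0) (at 0)"
    using bessel_ser_0_pos[OF assms] by (auto simp: isCont_def intro: order_tendstoD)
  then obtain d where "d > 0" and d: "\<And>x. x \<noteq> 0 \<Longrightarrow> dist x 0 < d \<Longrightarrow> bessel_ser \<nu> 0 (x^2 / 4) > 0"
    unfolding eventually_at by blast
  show ?thesis
  proof
    show "d / 2 > 0" using \<open>d > 0\<close> by simp
    fix x assume "0 < x" "x \<le> d / 2"
    then show "bessel_u \<nu> x > 0"
      using d[of x] \<open>d > 0\<close> by (simp add: bessel_u_def)
  qed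
qed

section \<open>Sturm comparison\<close>

lemma card_ge_points_in_consecutive_cells:
  fixes S :: "real set"
  assumes "finite S" "d > 0"
    and cells: "\<And>j. j < n \<Longrightarrow> \<exists>z\<in>S. a + real j * d < z \<and> z \<le> a + real (Suc j) * d"
  shows "n \<le> card S"
proof -
  obtain g where g: "\<And>j. j < n \<Longrightarrow> g j \<in> S \<and> a + real j * d < g j \<and> g j \<le> a + real (Suc j) * d"
    using cells by metis
  have "strict_mono_on {..<n} g"
  proof (rule strict_mono_onI)
    fix i j assume "i \<in> {..<n}" "j \<in> {..<n}" "i < j"
    moreover from this have "real (Suc i) * d \<le> real j * d"
      using \<open>d > 0\<close> by (intro mult_right_mono) auto
    ultimately show "g i < g j"
      using g[of i] g[of j] by simp
  qed
  then have "card {..<n} \<le> card S"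
    using g \<open>finite S\<close> by (intro card_inj_on_le strict_mono_on_imp_inj_on) auto
  then show ?thesis
    by simp
qed

text \<open>The last assumption rules out \<open>u \<equiv> 0\<close> near \<open>0\<close>; through the energy estimate in
  \<open>no_double_zero\<close> it makes every zero of \<open>u\<close> simple.\<close>
locale sturm_eq =
  fixes u u' q :: "real \<Rightarrow> real"
  assumes has_deriv_u: "\<And>x. x > 0 \<Longrightarrow> (u has_real_derivative u' x) (at x)"
    and has_deriv_u': "\<And>x. x > 0 \<Longrightarrow> (u' has_real_derivative - q x * u x) (at x)"
    and continuous_q: "continuous_on {0<..} q"
    and nonzero_near_0: "\<And>z. z > 0 \<Longrightarrow> \<exists>e. 0 < e \<and> e < z \<and> u e \<noteq> 0"
begin

lemma uminus: "sturm_eq (\<lambda>x. - u x) (\<lambda>x. - u' x) q"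
proof
  fix x :: real assume "x > 0"
  show "((\<lambda>x. - u x) has_real_derivative - u' x) (at x)"
    using has_deriv_u[OF \<open>x > 0\<close>] by (rule DERIV_minus)
  show "((\<lambda>x. - u' x) has_real_derivative - q x * - u x) (at x)"
    using DERIV_minus[OF has_deriv_u'[OF \<open>x > 0\<close>]] by simp
qed (use continuous_q nonzero_near_0 in auto)

lemma continuous_on_u: "S \<subseteq> {0<..} \<Longrightarrow> continuous_on S u"
  by (intro continuous_at_imp_continuous_on ballI DERIV_isCont[OF has_deriv_u]) auto

lemma continuous_on_u': "S \<subseteq> {0<..} \<Longrightarrow> continuous_on S u'"
  by (intro continuous_at_imp_continuous_on ballI DERIV_isCont[OF has_deriv_u']) auto

lemma no_double_zero:
  assumes z: "z > 0" "u z = 0" "u' z = 0"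
  shows False
proof -
  obtain e where e: "0 < e" "e < z" "u e \<noteq> 0"
    using nonzero_near_0[OF z(1)] by blast
  have "compact (q ` {e..z})"
    using e by (intro compact_continuous_image continuous_on_subset[OF continuous_q]) auto
  then have "bounded (q ` {e..z})"
    by (rule compact_imp_bounded)
  then obtain K where K: "\<forall>x\<in>{e..z}. \<bar>q x\<bar> \<le> K"
    unfolding bounded_iff by auto
  define E where "E x = ((u' x)^2 + (u x)^2) * exp ((K + 1) * x)" for x
  have dE: "(E has_real_derivative
      (2 * u x * u' x * (1 - q x) + ((u' x)^2 + (u x)^2) * (K + 1)) * exp ((K + 1) * x)) (at x)"
    if "x > 0" for x
    unfolding E_def[abs_def] using has_deriv_u[OF that] has_deriv_u'[OF that]
    by (auto intro!: derivative_eq_intros simp: algebra_simps)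
  have "E e \<le> E z"
  proof (rule DERIV_nonneg_imp_increasing_open[of e z E])
    fix x assume x: "e < x" "x < z"
    have "0 \<le> (u x - u' x)^2" "0 \<le> (u x + u' x)^2"
      by simp_all
    then have "\<bar>2 * u x * u' x\<bar> \<le> (u' x)^2 + (u x)^2"
      by (simp add: abs_le_iff power2_eq_square algebra_simps)
    moreover have "\<bar>q x\<bar> \<le> K"
      using K x by simp
    then have "\<bar>1 - q x\<bar> \<le> K + 1"
      by linarith
    ultimately have "\<bar>2 * u x * u' x * (1 - q x)\<bar> \<le> ((u' x)^2 + (u x)^2) * (K + 1)"
      unfolding abs_mult[of _ "1 - q x"] by (intro mult_mono) auto
    then show "\<exists>y. (E has_real_derivative y) (at x) \<and> 0 \<le> y"
      using dE[of x] x e by (intro exI conjI) (auto simp: abs_le_iff)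
  next
    show "continuous_on {e..z} E"
      using e by (intro continuous_at_imp_continuous_on ballI DERIV_isCont[OF dE]) auto
  qed (use e in simp)
  moreover have "E z = 0" "E e > 0"
    using z e(3) by (auto simp: E_def add_nonneg_pos)
  ultimately show False by simp
qed

lemma pos_if_no_zero:
  assumes "connected S" "S \<subseteq> {0<..}" "\<forall>x\<in>S. u x \<noteq> 0" "c \<in> S" "u c > 0" "x \<in> S"
  shows "u x > 0"
proof (rule ccontr)
  assume "\<not> u x > 0"
  have "connected (u ` S)"
    using assms(1,2) by (intro connected_continuous_image continuous_on_u)
  moreover have "u x \<in> u ` S" "u c \<in> u ` S"
    using assms(4,6) by auto
  ultimately have "0 \<in> u ` S"
    by (rule connected_iff_interval[THEN iffD1, rule_format])
      (use \<open>\<not> u x > 0\<close> \<open>u c > 0\<close> in auto)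
  then show False
    using assms(3) by auto
qed

text \<open>The Wronskian of \<open>u\<close> and the comparison solution \<open>sin (s (x - a))\<close> of \<open>v'' + s\<^sup>2 v = 0\<close>.\<close>
definition wronskian_sin :: "real \<Rightarrow> real \<Rightarrow> real \<Rightarrow> real" where
  "wronskian_sin s a x = u' x * sin (s * (x - a)) - u x * (s * cos (s * (x - a)))"

lemma wronskian_sin_deriv:
  "x > 0 \<Longrightarrow> (wronskian_sin s a has_real_derivative (s^2 - q x) * u x * sin (s * (x - a))) (at x)"
  unfolding wronskian_sin_def[abs_def] using has_deriv_u has_deriv_u'
  by (auto intro!: derivative_eq_intros simp: algebra_simps power2_eq_square)

lemma continuous_on_wronskian_sin:
  assumes "S \<subseteq> {0<..}"
  shows "continuous_on S (wronskian_sin s a)"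
  unfolding wronskian_sin_def[abs_def]
  using continuous_on_u[OF assms] continuous_on_u'[OF assms] by (intro continuous_intros)

lemma sin_nonneg_on_half_period:
  assumes "s > 0" "a \<le> x" "x \<le> a + pi / s"
  shows "sin (s * (x - a)) \<ge> 0"
proof (rule sin_ge_zero)
  show "0 \<le> s * (x - a)" using assms by simp
  have "s * (x - a) \<le> s * (pi / s)" using assms by (intro mult_left_mono) auto
  then show "s * (x - a) \<le> pi" using assms by simp
qed

lemma not_pos_on_half_period:
  assumes a: "a > 0" and m: "m > 0" and q_ge: "\<forall>x\<in>{a..a + pi / sqrt m}. q x \<ge> m"
  shows "\<not> (\<forall>x\<in>{a<..a + pi / sqrt m}. u x > 0)"
proof
  assume pos: "\<forall>x\<in>{a<..a + pi / sqrt m}. u x > 0"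
  define s where "s = sqrt m"
  define b where "b = a + pi / s"
  have s: "s > 0" "s^2 = m" and ab: "a < b"
    using m by (auto simp: s_def b_def)
  have pos_ab: "u x > 0" if "a < x" "x \<le> b" for x
    using pos that by (simp add: b_def s_def)
  have "u a \<ge> 0"
  proof (rule ccontr)
    assume "\<not> u a \<ge> 0"
    moreover have "continuous_on {a..b} u"
      using a by (intro continuous_on_u) auto
    ultimately have "\<exists>y\<ge>a. y \<le> b \<and> u y = 0"
      using pos_ab[of b] ab by (intro IVT') auto
    then obtain y where "a \<le> y" "y \<le> b" "u y = 0"
      by blast
    then show False
      using pos_ab[of y] \<open>\<not> u a \<ge> 0\<close> by (cases "y = a") auto
  qed
  have "wronskian_sin s a b \<le> wronskian_sin s a a"
  proof (rule DERIV_nonpos_imp_decreasing_open[OF less_imp_le[OF ab]])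
    fix x assume x: "a < x" "x < b"
    have "(s^2 - q x) * u x * sin (s * (x - a)) \<le> 0"
      using q_ge pos_ab[of x] x s sin_nonneg_on_half_period[of s a x]
      by (intro mult_nonpos_nonneg) (auto simp: b_def s_def)
    then show "\<exists>y. (wronskian_sin s a has_real_derivative y) (at x) \<and> y \<le> 0"
      using wronskian_sin_deriv[of x s a] x a by (intro exI conjI) auto
  next
    show "continuous_on {a..b} (wronskian_sin s a)"
      using a by (intro continuous_on_wronskian_sin) auto
  qed
  moreover have "wronskian_sin s a b = u b * s" "wronskian_sin s a a = - u a * s"
    using s by (simp_all add: wronskian_sin_def b_def)
  moreover have "u b * s > 0" "u a * s \<ge> 0"
    using pos_ab[of b] ab \<open>u a \<ge> 0\<close> s by simp_all
  ultimately show False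
    by linarith
qed

lemma zero_in_half_period:
  assumes a: "a > 0" and m: "m > 0" and q_ge: "\<forall>x\<in>{a..a + pi / sqrt m}. q x \<ge> m"
  shows "\<exists>z. a < z \<and> z \<le> a + pi / sqrt m \<and> u z = 0"
proof (rule ccontr)
  let ?I = "{a<..a + pi / sqrt m}"
  assume "\<not> ?thesis"
  then have nz: "\<forall>x\<in>?I. u x \<noteq> 0" and nz': "\<forall>x\<in>?I. - u x \<noteq> 0"
    by auto
  have I: "connected ?I" "?I \<subseteq> {0<..}" "a + pi / sqrt m \<in> ?I"
    using a m by auto
  then have "u (a + pi / sqrt m) \<noteq> 0"
    using nz by blast
  then consider "u (a + pi / sqrt m) > 0" | "- u (a + pi / sqrt m) > 0"
    by linarith
  then show False
  proof cases
    case 1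
    then have "\<forall>x\<in>?I. u x > 0"
      using pos_if_no_zero[OF I(1,2) nz I(3)] by blast
    then show False
      using not_pos_on_half_period[OF a m q_ge] by blast
  next
    case 2
    then have "\<forall>x\<in>?I. - u x > 0"
      using sturm_eq.pos_if_no_zero[OF uminus I(1,2) nz' I(3)] by blast
    then show False
      using sturm_eq.not_pos_on_half_period[OF uminus a m q_ge] by blast
  qed
qed

lemma zero_isolated_right:
  assumes "z > 0" "u z = 0"
  obtains d where "d > 0" "\<And>h. 0 < h \<Longrightarrow> h < d \<Longrightarrow> u (z + h) \<noteq> 0"
proof -
  have "u' z \<noteq> 0"
    using no_double_zero assms by blast
  then have "\<exists>d>0. \<forall>h>0. h < d \<longrightarrow> u (z + h) \<noteq> 0"
    using DERIV_pos_inc_right[OF has_deriv_u[OF assms(1)]]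
      DERIV_neg_dec_right[OF has_deriv_u[OF assms(1)]] assms(2)
    by (cases "u' z > 0") force+
  then show thesis
    using that by blast
qed

lemma first_zero_after:
  assumes "z1 > 0" "z1 < z2" "u z1 = 0" "u z2 = 0"
  obtains z where "z1 < z" "z \<le> z2" "u z = 0" "\<forall>x\<in>{z1<..<z}. u x \<noteq> 0"
proof -
  obtain d where "d > 0" and d: "\<And>h. 0 < h \<Longrightarrow> h < d \<Longrightarrow> u (z1 + h) \<noteq> 0"
    using zero_isolated_right assms(1,3) by blast
  define Z where "Z = {x \<in> {z1 + min d (z2 - z1)..z2}. u x = 0}"
  have "z2 \<in> Z"
    using assms(2,4) by (auto simp: Z_def)
  moreover have "closed Z"
    unfolding Z_def using assms(1,2) \<open>d > 0\<close>
    by (intro continuous_closed_preimage_constant continuous_on_u) auto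
  ultimately have "Inf Z \<in> Z"
    by (intro closed_contains_Inf) (auto simp: Z_def bdd_below_def)
  moreover have "u x \<noteq> 0" if "z1 < x" "x < Inf Z" for x
  proof
    assume "u x = 0"
    moreover have "x \<le> z2"
      using that \<open>z2 \<in> Z\<close> cInf_lower[of z2 Z] by (fastforce simp: Z_def bdd_below_def)
    ultimately have "x \<in> Z \<or> x - z1 < d"
      by (auto simp: Z_def)
    then show False
      using that d[of "x - z1"] \<open>u x = 0\<close> cInf_lower[of x Z] by (auto simp: Z_def bdd_below_def)
  qed
  ultimately show thesis
    using \<open>d > 0\<close> assms(2) by (intro that[of "Inf Z"]) (auto simp: Z_def)
qed

lemma not_pos_between_close_zeros:
  assumes z1: "z1 > 0" "z1 < z2" "u z1 = 0" "u z2 = 0" and M: "M > 0"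
    and close: "z2 - z1 < pi / sqrt M" and q_le: "\<forall>x\<in>{z1..z2}. q x \<le> M"
  shows "\<not> (\<forall>x\<in>{z1<..<z2}. u x > 0)"
proof
  assume pos: "\<forall>x\<in>{z1<..<z2}. u x > 0"
  define s where "s = sqrt M"
  have s: "s > 0" "s^2 = M" "z2 - z1 < pi / s"
    using M close by (auto simp: s_def)
  have "wronskian_sin s z1 z1 \<le> wronskian_sin s z1 z2"
  proof (rule DERIV_nonneg_imp_increasing_open[of z1 z2 "wronskian_sin s z1"])
    fix x assume x: "z1 < x" "x < z2"
    have "0 \<le> (s^2 - q x) * u x * sin (s * (x - z1))"
      using q_le pos x s sin_nonneg_on_half_period[of s z1 x]
      by (intro mult_nonneg_nonneg) (auto simp: less_imp_le)
    then show "\<exists>y. (wronskian_sin s z1 has_real_derivative y) (at x) \<and> 0 \<le> y"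
      using wronskian_sin_deriv[of x s z1] x z1 by (intro exI conjI) auto
  next
    show "continuous_on {z1..z2} (wronskian_sin s z1)"
      using z1 by (intro continuous_on_wronskian_sin) auto
  qed (use z1 in simp)
  moreover have "sin (s * (z2 - z1)) > 0"
    using s z1 by (intro sin_gt_zero) (auto simp: pos_less_divide_eq mult.commute)
  ultimately have "u' z2 \<ge> 0"
    using z1 by (simp add: wronskian_sin_def zero_le_mult_iff)
  moreover have "\<not> u' z2 > 0"
  proof
    assume "u' z2 > 0"
    then obtain d where "d > 0" and d: "\<And>h. h > 0 \<Longrightarrow> h < d \<Longrightarrow> u (z2 - h) < u z2"
      using DERIV_pos_inc_left[OF has_deriv_u[of z2]] z1 by auto
    define h where "h = min (d / 2) ((z2 - z1) / 2)"
    have "h > 0" "h < d" "z1 < z2 - h" "z2 - h < z2"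
      using \<open>d > 0\<close> z1 by (auto simp: h_def min_def field_simps)
    then show False
      using d[of h] pos[rule_format, of "z2 - h"] z1 by auto
  qed
  ultimately show False
    using no_double_zero z1 by fastforce
qed

lemma zero_gap_ge:
  assumes z1: "z1 > 0" "z1 < z2" "u z1 = 0" "u z2 = 0" and M: "M > 0"
    and q_le: "\<forall>x\<in>{z1..z2}. q x \<le> M"
  shows "z2 - z1 \<ge> pi / sqrt M"
proof (rule ccontr)
  assume gap: "\<not> z2 - z1 \<ge> pi / sqrt M"
  obtain z where z: "z1 < z" "z \<le> z2" "u z = 0" and nz: "\<forall>x\<in>{z1<..<z}. u x \<noteq> 0"
    using first_zero_after[OF z1] by blast
  have close: "z - z1 < pi / sqrt M" and q_le': "\<forall>x\<in>{z1..z}. q x \<le> M"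
    using gap z q_le by auto
  let ?I = "{z1<..<z}"
  have I: "connected ?I" "?I \<subseteq> {0<..}" "(z1 + z) / 2 \<in> ?I"
    using z1 z by auto
  have nz': "\<forall>x\<in>?I. - u x \<noteq> 0"
    using nz by simp
  consider "u ((z1 + z) / 2) > 0" | "- u ((z1 + z) / 2) > 0"
    using nz I(3) by (metis neg_0_less_iff_less linorder_neqE_linordered_idom)
  then show False
  proof cases
    case 1
    then have "\<forall>x\<in>?I. u x > 0"
      using pos_if_no_zero[OF I(1,2) nz I(3)] by blast
    then show False
      using not_pos_between_close_zeros[OF z1(1) z(1) z1(3) z(3) M close q_le'] by blast
  next
    case 2
    then have "\<forall>x\<in>?I. - u x > 0"
      using sturm_eq.pos_if_no_zero[OF uminus I(1,2) nz' I(3)] by blast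
    then show False
      using sturm_eq.not_pos_between_close_zeros[OF uminus z1(1) z(1) _ _ M close q_le'] z1(3) z(3)
      by simp
  qed
qed

lemma card_zeros_le:
  assumes A: "A > 0" "A \<le> B" and M: "M > 0" and q_le: "\<forall>x\<in>{A..B}. q x \<le> M"
  shows "finite {x\<in>{A..B}. u x = 0}"
    and "real (card {x\<in>{A..B}. u x = 0}) \<le> (B - A) * sqrt M / pi + 1"
proof -
  define d where "d = pi / sqrt M"
  define Z where "Z = {x\<in>{A..B}. u x = 0}"
  define f where "f x = nat \<lfloor>(x - A) / d\<rfloor>" for x
  define K where "K = nat \<lfloor>(B - A) / d\<rfloor>"
  have d: "d > 0"
    using M by (simp add: d_def)
  have fZ: "f ` Z \<subseteq> {0..K}"
    using d by (auto simp: Z_def f_def K_def intro!: nat_mono floor_mono divide_right_mono)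
  moreover have inj: "inj_on f Z"
  proof -
    have "f x < f y" if "x \<in> Z" "y \<in> Z" "x < y" for x y
    proof -
      have "y - x \<ge> d"
        unfolding d_def using that A q_le M by (intro zero_gap_ge) (auto simp: Z_def)
      then have "1 \<le> (y - x) / d"
        using d by simp
      moreover have "(y - A) / d = (x - A) / d + (y - x) / d"
        by (simp add: diff_divide_distrib)
      ultimately have "(x - A) / d + 1 \<le> (y - A) / d"
        by linarith
      then have "\<lfloor>(x - A) / d\<rfloor> + 1 \<le> \<lfloor>(y - A) / d\<rfloor>"
        by (metis floor_add_int floor_mono of_int_1)
      moreover have "0 \<le> \<lfloor>(x - A) / d\<rfloor>"
        using that d by (simp add: Z_def)
      ultimately show ?thesis
        unfolding f_def by (subst nat_less_eq_zless) linarith+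
    qed
    then show ?thesis
      by (metis inj_onI linorder_neqE_linordered_idom less_irrefl)
  qed
  show "finite {x\<in>{A..B}. u x = 0}"
    unfolding Z_def[symmetric] by (rule inj_on_finite[OF inj fZ]) simp
  have "card Z \<le> card {0..K}"
    by (rule card_inj_on_le[OF inj fZ]) simp
  have "real K \<le> (B - A) / d"
    using A d by (simp add: K_def)
  with \<open>card Z \<le> card {0..K}\<close> show "real (card {x\<in>{A..B}. u x = 0}) \<le> (B - A) * sqrt M / pi + 1"
    by (simp add: Z_def d_def)
qed

lemma card_zeros_ge:
  assumes A: "A > 0" "A \<le> B" and "m \<ge> 0" and q_ge: "\<forall>x\<in>{A..B}. q x \<ge> m"
    and fin: "finite {x\<in>{A<..B}. u x = 0}"
  shows "real (card {x\<in>{A<..B}. u x = 0}) \<ge> (B - A) * sqrt m / pi - 1"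
proof (cases "m = 0")
  case False
  with \<open>m \<ge> 0\<close> have m: "m > 0"
    by simp
  define d where "d = pi / sqrt m"
  define n where "n = nat \<lfloor>(B - A) / d\<rfloor>"
  have d: "d > 0"
    using m by (simp add: d_def)
  have "real n \<le> (B - A) / d"
    using A d by (simp add: n_def)
  then have n: "real n * d \<le> B - A"
    using d by (simp add: pos_le_divide_eq)
  have "n \<le> card {x\<in>{A<..B}. u x = 0}"
  proof (rule card_ge_points_in_consecutive_cells[OF fin d])
    fix j assume "j < n"
    then have "real (Suc j) * d \<le> real n * d"
      using d by (intro mult_right_mono) auto
    then have cell: "A \<le> A + real j * d" "A + real j * d + d \<le> B"
      using n d by (simp_all add: algebra_simps)
    then have "\<forall>x\<in>{A + real j * d..A + real j * d + pi / sqrt m}. m \<le> q x"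
      using q_ge by (auto simp: d_def[symmetric])
    moreover have "0 < A + real j * d"
      using A d by (simp add: add_pos_nonneg)
    ultimately obtain z where z: "A + real j * d < z" "z \<le> A + real j * d + d" "u z = 0"
      using zero_in_half_period[of "A + real j * d" m] m by (auto simp: d_def[symmetric])
    moreover from z cell have "A < z" "z \<le> B"
      by linarith+
    ultimately show "\<exists>z\<in>{x\<in>{A<..B}. u x = 0}. A + real j * d < z \<and> z \<le> A + real (Suc j) * d"
      by (intro bexI[of _ z]) (auto simp: algebra_simps)
  qed
  moreover have "(B - A) / d - 1 \<le> real n"
    using A d by (simp add: n_def)
  ultimately show ?thesis
    by (simp add: d_def)
qed simp

end

section \<open>The Debye phase\<close>

text \<open>With \<open>h = sec \<beta>\<close> this is \<open>tan \<beta> - \<beta>\<close>, the phase in Debye's asymptotics of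
  \<open>J\<^sub>\<nu>(\<nu> sec \<beta>)\<close>.\<close>
definition debye_phase :: "real \<Rightarrow> real" where
  "debye_phase h = sqrt (h^2 - 1) - arcsec h"

definition debye_phase' :: "real \<Rightarrow> real" where
  "debye_phase' t = sqrt (1 - 1 / t^2)"

lemma debye_phase_1 [simp]: "debye_phase 1 = 0"
  by (simp add: debye_phase_def arcsec_def)

lemma continuous_on_debye_phase: "continuous_on {1..} debye_phase"
  unfolding debye_phase_def[abs_def] arcsec_def
  by (intro continuous_intros) (auto simp: divide_simps)

lemma debye_phase_deriv:
  assumes h: "h > 1"
  shows "(debye_phase has_real_derivative debye_phase' h) (at h)"
proof -
  define r where "r = sqrt (h^2 - 1)"
  have "h^2 > 1"
    using h by (simp add: one_less_power)
  then have r: "r > 0" "h * h = 1 + r * r"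
    by (auto simp: r_def power2_eq_square)
  have "-1 < 1 / h" "1 / h < 1"
    using h by (auto simp: divide_simps)
  have "((\<lambda>h. sqrt (h^2 - 1)) has_real_derivative inverse r / 2 * (2 * h)) (at h)"
    using \<open>h^2 > 1\<close> unfolding r_def by (auto intro!: derivative_eq_intros simp: power2_eq_square)
  moreover have "((\<lambda>h. arccos (1 / h)) has_real_derivative
      inverse (- sqrt (1 - (1 / h)^2)) * (- 1 / h^2)) (at h)"
    using h \<open>-1 < 1 / h\<close> \<open>1 / h < 1\<close>
    by (auto intro!: derivative_eq_intros DERIV_chain2[OF DERIV_arccos]
        simp: power2_eq_square divide_simps)
  ultimately have deriv: "(debye_phase has_real_derivative
      inverse r / 2 * (2 * h) - inverse (- sqrt (1 - (1 / h)^2)) * (- 1 / h^2)) (at h)"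
    unfolding debye_phase_def[abs_def] arcsec_def by (rule DERIV_diff)
  have "(r / h)^2 = (h * h - 1) / (h * h)"
    using r by (simp add: power_divide power2_eq_square)
  also have "\<dots> = 1 - (1 / h)^2"
    using h by (simp add: diff_divide_distrib power2_eq_square)
  finally have sqrt_eq: "sqrt (1 - (1 / h)^2) = r / h"
    using h r by (intro real_sqrt_unique) auto
  have "inverse r / 2 * (2 * h) - inverse (- (r / h)) * (- 1 / h^2) = h / r - 1 / (r * h)"
    using r(1) h by (simp add: field_simps power2_eq_square)
  also have "\<dots> = (h * h - 1) / (r * h)"
    using r(1) h by (simp add: field_simps)
  also have "\<dots> = (r * r) / (r * h)"
    using r(2) by simp
  also have "\<dots> = r / h"
    using r(1) by simp
  finally have "inverse r / 2 * (2 * h) - inverse (- sqrt (1 - (1 / h)^2)) * (- 1 / h^2) = r / h"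
    unfolding sqrt_eq .
  moreover have "debye_phase' h = r / h"
    using sqrt_eq by (simp add: debye_phase'_def power_divide)
  ultimately show ?thesis
    using deriv by simp
qed

lemma debye_phase'_nonneg: "t \<ge> 1 \<Longrightarrow> debye_phase' t \<ge> 0"
  by (simp add: debye_phase'_def divide_simps)

lemma debye_phase'_le_1: "t \<ge> 1 \<Longrightarrow> debye_phase' t \<le> 1"
  by (simp add: debye_phase'_def)

lemma debye_phase'_pos: "t > 1 \<Longrightarrow> debye_phase' t > 0"
  by (simp add: debye_phase'_def divide_simps one_less_power)

lemma debye_phase'_sq: "t \<ge> 1 \<Longrightarrow> (debye_phase' t)^2 = 1 - 1 / t^2"
  by (simp add: debye_phase'_def divide_simps one_le_power)

lemma debye_phase'_mono:
  assumes "1 \<le> a" "a \<le> b"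
  shows "debye_phase' a \<le> debye_phase' b"
proof -
  have "a^2 \<le> b^2"
    using assms by (intro power_mono) auto
  then have "1 / b^2 \<le> 1 / a^2"
    using assms by (intro divide_left_mono) auto
  then show ?thesis
    by (simp add: debye_phase'_def)
qed

lemma debye_phase_diff_bounds:
  assumes "1 \<le> a" "a \<le> b"
  shows "(b - a) * debye_phase' a \<le> debye_phase b - debye_phase a"
    and "debye_phase b - debye_phase a \<le> (b - a) * debye_phase' b"
proof -
  have "\<exists>z. a \<le> z \<and> z \<le> b \<and> debye_phase b - debye_phase a = (b - a) * debye_phase' z"
  proof (cases "a = b")
    case False
    have "continuous_on {a..b} debye_phase"
      using assms by (intro continuous_on_subset[OF continuous_on_debye_phase]) auto
    moreover have "debye_phase differentiable (at x)" if "a < x" for x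
      using debye_phase_deriv[of x] that assms real_differentiable_def by fastforce
    ultimately obtain l z where z: "a < z" "z < b" "DERIV debye_phase z :> l"
        "debye_phase b - debye_phase a = (b - a) * l"
      using MVT[of a b debye_phase] False assms by auto
    then show ?thesis
      using DERIV_unique[OF z(3) debye_phase_deriv[of z]] assms by (intro exI[of _ z]) auto
  qed auto
  then obtain z where z: "a \<le> z" "z \<le> b" "debye_phase b - debye_phase a = (b - a) * debye_phase' z"
    by blast
  show "(b - a) * debye_phase' a \<le> debye_phase b - debye_phase a"
    and "debye_phase b - debye_phase a \<le> (b - a) * debye_phase' b"
    unfolding z(3) using assms z by (auto intro!: mult_left_mono debye_phase'_mono)
qed

lemma debye_phase_strict_mono:
  assumes "1 \<le> a" "a < b"
  shows "debye_phase a < debye_phase b"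
proof -
  define c where "c = (a + b) / 2"
  have c: "a < c" "c < b"
    using assms by (auto simp: c_def)
  have "0 \<le> (c - a) * debye_phase' a"
    using assms c by (intro mult_nonneg_nonneg debye_phase'_nonneg) auto
  also have "\<dots> \<le> debye_phase c - debye_phase a"
    using assms c by (intro debye_phase_diff_bounds) auto
  finally have "debye_phase a \<le> debye_phase c"
    by simp
  have "0 < (b - c) * debye_phase' c"
    using assms c by (intro mult_pos_pos debye_phase'_pos) auto
  also have "\<dots> \<le> debye_phase b - debye_phase c"
    using assms c by (intro debye_phase_diff_bounds) auto
  finally show ?thesis
    using \<open>debye_phase a \<le> debye_phase c\<close> by simp
qed

lemma debye_phase_ge:
  assumes "h \<ge> 1"
  shows "debye_phase h \<ge> h - 1 - pi"
proof -
  have "(h - 1)^2 \<le> h^2 - 1"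
    using assms by (simp add: power2_eq_square algebra_simps)
  then have "h - 1 \<le> sqrt (h^2 - 1)"
    using assms real_le_rsqrt by simp
  moreover have "arcsec h \<le> pi"
    unfolding arcsec_def using assms by (intro arccos_ubound) (auto simp: divide_simps)
  ultimately show ?thesis
    by (simp add: debye_phase_def)
qed

lemma ex1_debye_phase_eq:
  assumes "c > 0"
  shows "\<exists>!h. h > 1 \<and> debye_phase h = c"
proof -
  define b where "b = c + 1 + pi"
  have "b \<ge> 1" "continuous_on {1..b} debye_phase" "debye_phase 1 \<le> c" "c \<le> debye_phase b"
    using assms debye_phase_ge[of b] pi_gt_zero
    by (auto simp: b_def intro: continuous_on_subset[OF continuous_on_debye_phase])
  then obtain h where "1 \<le> h" "debye_phase h = c"
    using IVT'[of debye_phase 1 c b] by auto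
  moreover have "h \<noteq> 1"
    using \<open>debye_phase h = c\<close> assms by auto
  moreover have "h' = h" if "h' > 1" "debye_phase h' = c" for h'
    using debye_phase_strict_mono[of h h'] debye_phase_strict_mono[of h' h] that
      \<open>1 \<le> h\<close> \<open>debye_phase h = c\<close>
    by (cases h h' rule: linorder_cases) auto
  ultimately show ?thesis
    by (intro ex1I[of _ h]) auto
qed

lemma debye_phase_riemann_sums:
  assumes n: "n > 0" and H: "H \<ge> 1"
  defines "D \<equiv> (H - 1) / real n"
  shows "debye_phase H - D \<le> (\<Sum>i<n. D * debye_phase' (1 + real i * D))"
    and "(\<Sum>i<n. D * debye_phase' (1 + real (Suc i) * D)) \<le> debye_phase H + D"
proof -
  define t where "t i = 1 + real i * D" for i
  have D: "D \<ge> 0"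
    using H n by (simp add: D_def)
  have t: "t 0 = 1" "t (Suc i) = t i + D" "t i \<ge> 1" for i
    using D by (simp_all add: t_def distrib_right)
  have "t n = H"
    using n by (simp add: t_def D_def)
  have telescope: "(\<Sum>i<n. debye_phase (t (Suc i)) - debye_phase (t i)) = debye_phase H"
    using sum_lessThan_telescope[of "\<lambda>i. debye_phase (t i)" n] by (simp add: t \<open>t n = H\<close>)
  have "(\<Sum>i<n. D * debye_phase' (t (Suc i))) - (\<Sum>i<n. D * debye_phase' (t i))
      = D * debye_phase' H - D * debye_phase' 1"
    using sum_lessThan_telescope[of "\<lambda>i. D * debye_phase' (t i)" n] by (simp add: t \<open>t n = H\<close> sum_subtractf)
  also have "\<dots> \<le> D"
    using D debye_phase'_le_1[of H] H by (simp add: debye_phase'_def mult_left_le)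
  finally have right_left: "(\<Sum>i<n. D * debye_phase' (t (Suc i))) \<le> (\<Sum>i<n. D * debye_phase' (t i)) + D"
    by simp
  have left: "(\<Sum>i<n. D * debye_phase' (t i)) \<le> debye_phase H"
    unfolding telescope[symmetric] using debye_phase_diff_bounds(1)[of "t i" "t (Suc i)" for i] t D
    by (intro sum_mono) simp
  have right: "debye_phase H \<le> (\<Sum>i<n. D * debye_phase' (t (Suc i)))"
    unfolding telescope[symmetric] using debye_phase_diff_bounds(2)[of "t i" "t (Suc i)" for i] t D
    by (intro sum_mono) simp
  show "debye_phase H - D \<le> (\<Sum>i<n. D * debye_phase' (1 + real i * D))"
    and "(\<Sum>i<n. D * debye_phase' (1 + real (Suc i) * D)) \<le> debye_phase H + D"
    using left right right_left by (simp_all add: t_def)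
qed

section \<open>Zeros of \<open>J\<^sub>\<nu>\<close>\<close>

lemma sturm_eq_bessel: "\<nu> \<ge> 0 \<Longrightarrow> sturm_eq (bessel_u \<nu>) (bessel_u' \<nu>) (bessel_q \<nu>)"
proof unfold_locales
  show "continuous_on {0<..} (bessel_q \<nu>)"
    unfolding bessel_q_def[abs_def] by (intro continuous_intros) auto
next
  fix z :: real assume "\<nu> \<ge> 0" "z > 0"
  then obtain e where "e > 0" and e: "\<And>x. 0 < x \<Longrightarrow> x \<le> e \<Longrightarrow> bessel_u \<nu> x > 0"
    using bessel_u_pos_near_0 by blast
  have "0 < min e (z / 2)" "min e (z / 2) \<le> e" "min e (z / 2) < z"
    using \<open>e > 0\<close> \<open>z > 0\<close> by auto
  then show "\<exists>e. 0 < e \<and> e < z \<and> bessel_u \<nu> e \<noteq> 0"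
    using e[of "min e (z / 2)"] by (intro exI[of _ "min e (z / 2)"]) auto
qed (use bessel_u_deriv bessel_u'_deriv in simp_all)

lemma bessel_q_mono:
  assumes "\<nu> \<ge> 1" "0 < x" "x \<le> y"
  shows "bessel_q \<nu> x \<le> bessel_q \<nu> y"
proof -
  have "\<nu>^2 \<ge> 1"
    using assms by (simp add: one_le_power)
  then have "\<nu>^2 - 1/4 \<ge> 0"
    by simp
  moreover have "x^2 \<le> y^2"
    using assms by (intro power_mono) auto
  ultimately have "(\<nu>^2 - 1/4) / y^2 \<le> (\<nu>^2 - 1/4) / x^2"
    using assms by (intro divide_left_mono) auto
  then show ?thesis
    by (simp add: bessel_q_def)
qed

lemma bessel_q_le_1:
  assumes "\<nu> \<ge> 1"
  shows "bessel_q \<nu> x \<le> 1"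
proof -
  have "\<nu>^2 \<ge> 1"
    using assms by (simp add: one_le_power)
  then show ?thesis
    by (simp add: bessel_q_def)
qed

definition bessel_zeros :: "real \<Rightarrow> real \<Rightarrow> real set" where
  "bessel_zeros \<nu> X = {y. 0 < y \<and> y < X \<and> bessel_J \<nu> y = 0}"

lemma bessel_zeros_eq: "\<nu> \<ge> 0 \<Longrightarrow> bessel_zeros \<nu> X = {y \<in> {0<..<X}. bessel_u \<nu> y = 0}"
  by (auto simp: bessel_zeros_def bessel_J_eq_0_iff)

lemma finite_bessel_zeros:
  assumes "\<nu> \<ge> 1"
  shows "finite (bessel_zeros \<nu> X)"
proof -
  interpret sturm_eq "bessel_u \<nu>" "bessel_u' \<nu>" "bessel_q \<nu>"
    using assms by (intro sturm_eq_bessel) simp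
  obtain e where e: "e > 0" "\<And>x. 0 < x \<Longrightarrow> x \<le> e \<Longrightarrow> bessel_u \<nu> x > 0"
    using bessel_u_pos_near_0[of \<nu>] assms by auto
  have "finite {x\<in>{e..max e X}. bessel_u \<nu> x = 0}"
    using card_zeros_le(1)[of e "max e X" 1] e bessel_q_le_1[OF assms] by auto
  moreover have "bessel_zeros \<nu> X \<subseteq> {x\<in>{e..max e X}. bessel_u \<nu> x = 0}"
    using assms e(2) by (force simp: bessel_zeros_eq not_le)
  ultimately show ?thesis
    by (rule finite_subset[rotated])
qed

lemma bessel_zeros_unbounded:
  assumes "\<nu> \<ge> 1"
  shows "\<exists>z>X. bessel_J \<nu> z = 0"
proof -
  interpret sturm_eq "bessel_u \<nu>" "bessel_u' \<nu>" "bessel_q \<nu>"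
    using assms by (intro sturm_eq_bessel) simp
  define a where "a = max X (2 * \<nu>)"
  have a: "a > 0" "a \<ge> X" "a \<ge> 2 * \<nu>"
    using assms by (auto simp: a_def)
  have "bessel_q \<nu> x \<ge> 1/2" if "x \<ge> a" for x
  proof -
    have "(2 * \<nu>)^2 \<le> x^2"
      using that a assms by (intro power_mono) auto
    then have "\<nu>^2 / x^2 \<le> 1/4"
      using that a by (simp add: divide_simps power_mult_distrib)
    moreover have "(\<nu>^2 - 1/4) / x^2 \<le> \<nu>^2 / x^2"
      by (simp add: divide_right_mono)
    ultimately show ?thesis
      unfolding bessel_q_def by linarith
  qed
  then obtain z where "a < z" "bessel_u \<nu> z = 0"
    using zero_in_half_period[of a "1/2"] a by auto
  then show ?thesis
    using bessel_J_eq_0_iff[of \<nu> z] assms a by (intro exI[of _ z]) auto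
qed

lemma next_bessel_zero:
  assumes "\<nu> \<ge> 1" "a \<ge> 0"
  obtains x where "a < x" "bessel_J \<nu> x = 0" "\<And>y. a < y \<Longrightarrow> y < x \<Longrightarrow> bessel_J \<nu> y \<noteq> 0"
proof -
  obtain X where "X > a" "bessel_J \<nu> X = 0"
    using bessel_zeros_unbounded[OF assms(1)] by blast
  define S where "S = {y. a < y \<and> y \<le> X \<and> bessel_J \<nu> y = 0}"
  have "S \<subseteq> bessel_zeros \<nu> (X + 1)"
    using assms by (auto simp: S_def bessel_zeros_def)
  then have "finite S" "X \<in> S"
    using finite_subset finite_bessel_zeros[OF assms(1)] \<open>X > a\<close> \<open>bessel_J \<nu> X = 0\<close>
    by (auto simp: S_def)
  then have "Min S \<in> S" "\<And>y. y \<in> S \<Longrightarrow> Min S \<le> y"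
    using Min_in by auto
  then show thesis
    by (intro that[of "Min S"]) (force simp: S_def)+
qed

lemma card_bessel_zeros_less:
  assumes "\<nu> \<ge> 1" "0 < x" "bessel_J \<nu> x = 0" "x < y"
  shows "card (bessel_zeros \<nu> x) < card (bessel_zeros \<nu> y)"
proof -
  have "insert x (bessel_zeros \<nu> x) \<subseteq> bessel_zeros \<nu> y"
    using assms by (auto simp: bessel_zeros_def)
  then have "card (insert x (bessel_zeros \<nu> x)) \<le> card (bessel_zeros \<nu> y)"
    using finite_bessel_zeros[OF assms(1)] by (rule card_mono[rotated])
  then show ?thesis
    using finite_bessel_zeros[OF assms(1)] by (simp add: bessel_zeros_def)
qed

lemma ex_bessel_zero_card:
  assumes "\<nu> \<ge> 1"
  shows "\<exists>x. 0 < x \<and> bessel_J \<nu> x = 0 \<and> card (bessel_zeros \<nu> x) = k"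
proof (induction k)
  case 0
  obtain x where "0 < x" "bessel_J \<nu> x = 0" "\<And>y. 0 < y \<Longrightarrow> y < x \<Longrightarrow> bessel_J \<nu> y \<noteq> 0"
    using next_bessel_zero[OF assms, of 0] by auto
  moreover from this have "bessel_zeros \<nu> x = {}"
    by (auto simp: bessel_zeros_def)
  ultimately show ?case
    by auto
next
  case (Suc k)
  then obtain a where a: "0 < a" "bessel_J \<nu> a = 0" "card (bessel_zeros \<nu> a) = k"
    by blast
  obtain x where x: "a < x" "bessel_J \<nu> x = 0" "\<And>y. a < y \<Longrightarrow> y < x \<Longrightarrow> bessel_J \<nu> y \<noteq> 0"
    using next_bessel_zero[OF assms, of a] a by auto
  have "bessel_zeros \<nu> x = insert a (bessel_zeros \<nu> a)"
    using a x by (auto simp: bessel_zeros_def) (meson linorder_neqE_linordered_idom)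
  then show ?case
    using a x finite_bessel_zeros[OF assms] by (intro exI[of _ x]) (simp add: bessel_zeros_def)
qed

lemma bessel_zero_is_kth_zero:
  assumes "\<nu> \<ge> 1" "k \<ge> 1"
  shows "0 < bessel_zero \<nu> k" "bessel_J \<nu> (bessel_zero \<nu> k) = 0"
    and "card (bessel_zeros \<nu> (bessel_zero \<nu> k)) = k - 1"
proof -
  let ?P = "\<lambda>x. 0 < x \<and> bessel_J \<nu> x = 0 \<and> finite (bessel_zeros \<nu> x) \<and> card (bessel_zeros \<nu> x) = k - 1"
  have "\<exists>!x. ?P x"
  proof (rule ex_ex1I)
    show "\<exists>x. ?P x"
      using ex_bessel_zero_card[OF assms(1)] finite_bessel_zeros[OF assms(1)] by blast
    show "x = y" if "?P x" "?P y" for x y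
      using card_bessel_zeros_less[OF assms(1), of x y] card_bessel_zeros_less[OF assms(1), of y x] that
      by (cases x y rule: linorder_cases) auto
  qed
  then have "?P (bessel_zero \<nu> k)"
    unfolding bessel_zero_def bessel_zeros_def[symmetric] by (rule theI')
  then show "0 < bessel_zero \<nu> k" "bessel_J \<nu> (bessel_zero \<nu> k) = 0"
    and "card (bessel_zeros \<nu> (bessel_zero \<nu> k)) = k - 1"
    by blast+
qed

lemma bessel_zero_less:
  assumes "\<nu> \<ge> 1" "k \<ge> 1" "k \<le> card (bessel_zeros \<nu> X)"
  shows "bessel_zero \<nu> k < X"
proof (rule ccontr)
  assume "\<not> bessel_zero \<nu> k < X"
  then have "bessel_zeros \<nu> X \<subseteq> bessel_zeros \<nu> (bessel_zero \<nu> k)"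
    by (auto simp: bessel_zeros_def)
  then have "card (bessel_zeros \<nu> X) \<le> k - 1"
    using card_mono[OF finite_bessel_zeros] bessel_zero_is_kth_zero(3) assms(1,2) by metis
  then show False
    using assms by linarith
qed

lemma bessel_zero_ge:
  assumes "\<nu> \<ge> 1" "k \<ge> 1" "card (bessel_zeros \<nu> X) < k"
  shows "X \<le> bessel_zero \<nu> k"
proof (rule ccontr)
  assume "\<not> X \<le> bessel_zero \<nu> k"
  then have "k - 1 < card (bessel_zeros \<nu> X)"
    using card_bessel_zeros_less[of \<nu> "bessel_zero \<nu> k" X] bessel_zero_is_kth_zero[OF assms(1,2)] assms(1)
    by simp
  then show False
    using assms by linarith
qed

lemma debye_phase'_sq_le_bessel_q:
  assumes "\<nu> > 0" "T \<ge> 1" "x \<ge> \<nu> * T"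
  shows "(debye_phase' T)^2 \<le> bessel_q \<nu> x"
proof -
  have "0 < \<nu> * T"
    using assms by simp
  then have "x > 0"
    using assms by linarith
  have "(\<nu> * T)^2 \<le> x^2"
    using assms \<open>0 < \<nu> * T\<close> by (intro power_mono) auto
  then have "\<nu>^2 / x^2 \<le> \<nu>^2 / (\<nu> * T)^2"
    using \<open>x > 0\<close> \<open>0 < \<nu> * T\<close> by (intro divide_left_mono mult_pos_pos) auto
  also have "\<dots> = 1 / T^2"
    using assms by (simp add: power_mult_distrib)
  finally have "\<nu>^2 / x^2 \<le> 1 / T^2" .
  moreover have "(\<nu>^2 - 1/4) / x^2 \<le> \<nu>^2 / x^2"
    by (simp add: divide_right_mono)
  ultimately show ?thesis
    unfolding bessel_q_def debye_phase'_sq[OF assms(2)] by linarith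
qed

lemma sqrt_bessel_q_le:
  assumes "\<nu> \<ge> 1" "T \<ge> 1"
  shows "bessel_q \<nu> (\<nu> * T) > 0" "sqrt (bessel_q \<nu> (\<nu> * T)) \<le> debye_phase' T + 1 / (2 * \<nu>)"
proof -
  have q: "bessel_q \<nu> (\<nu> * T) = (debye_phase' T)^2 + 1 / (4 * \<nu>^2 * T^2)"
    using assms by (simp add: bessel_q_def debye_phase'_sq field_simps power_mult_distrib)
  show "bessel_q \<nu> (\<nu> * T) > 0"
    unfolding q using assms by (simp add: add_nonneg_pos)
  have "4 * \<nu>^2 * 1 \<le> 4 * \<nu>^2 * T^2"
    using assms by (intro mult_left_mono) (auto simp: one_le_power)
  then have "1 / (4 * \<nu>^2 * T^2) \<le> (1 / (2 * \<nu>))^2"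
    using assms by (simp add: power_divide power_mult_distrib divide_left_mono)
  moreover have "0 \<le> debye_phase' T / \<nu>"
    using debye_phase'_nonneg[OF assms(2)] assms by simp
  ultimately have "bessel_q \<nu> (\<nu> * T) \<le> (debye_phase' T + 1 / (2 * \<nu>))^2"
    unfolding q by (simp add: power2_sum)
  then show "sqrt (bessel_q \<nu> (\<nu> * T)) \<le> debye_phase' T + 1 / (2 * \<nu>)"
    using debye_phase'_nonneg[OF assms(2)] assms by (intro real_le_lsqrt) auto
qed

lemma card_bessel_u_zeros_ge:
  assumes \<nu>: "\<nu> \<ge> 1" and T: "T \<ge> 1" and D: "D \<ge> 0"
  shows "\<nu> / pi * (D * debye_phase' T) - 1 \<le> real (card {x\<in>{\<nu> * T<..\<nu> * (T + D)}. bessel_u \<nu> x = 0})"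
proof -
  interpret sturm_eq "bessel_u \<nu>" "bessel_u' \<nu>" "bessel_q \<nu>"
    using \<nu> by (intro sturm_eq_bessel) simp
  have T_pos: "0 < \<nu> * T" "\<nu> * T \<le> \<nu> * (T + D)"
    using \<nu> T D by (simp_all add: less_le_trans[OF zero_less_one])
  have "{x\<in>{\<nu> * T<..\<nu> * (T + D)}. bessel_u \<nu> x = 0} \<subseteq> bessel_zeros \<nu> (\<nu> * (T + D) + 1)"
    using \<nu> T_pos by (auto simp: bessel_zeros_eq)
  then have "finite {x\<in>{\<nu> * T<..\<nu> * (T + D)}. bessel_u \<nu> x = 0}"
    using finite_bessel_zeros[OF \<nu>] by (rule finite_subset)
  then have "(\<nu> * (T + D) - \<nu> * T) * sqrt ((debye_phase' T)^2) / pi - 1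
      \<le> real (card {x\<in>{\<nu> * T<..\<nu> * (T + D)}. bessel_u \<nu> x = 0})"
    using debye_phase'_sq_le_bessel_q[of \<nu> T] \<nu> T by (intro card_zeros_ge T_pos) auto
  then show ?thesis
    using debye_phase'_nonneg[OF T] by (simp add: algebra_simps)
qed

lemma card_bessel_u_zeros_le:
  assumes \<nu>: "\<nu> \<ge> 1" and T: "T \<ge> 1" and D: "D \<ge> 0"
  shows "finite {x\<in>{\<nu> * T..\<nu> * (T + D)}. bessel_u \<nu> x = 0}"
    and "real (card {x\<in>{\<nu> * T..\<nu> * (T + D)}. bessel_u \<nu> x = 0})
      \<le> \<nu> / pi * (D * debye_phase' (T + D)) + D / (2 * pi) + 1"
proof -
  interpret sturm_eq "bessel_u \<nu>" "bessel_u' \<nu>" "bessel_q \<nu>"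
    using \<nu> by (intro sturm_eq_bessel) simp
  have T_pos: "0 < \<nu> * T" "\<nu> * T \<le> \<nu> * (T + D)"
    using \<nu> T D by (simp_all add: less_le_trans[OF zero_less_one])
  have M: "bessel_q \<nu> (\<nu> * (T + D)) > 0"
    "sqrt (bessel_q \<nu> (\<nu> * (T + D))) \<le> debye_phase' (T + D) + 1 / (2 * \<nu>)"
    using sqrt_bessel_q_le[OF \<nu>, of "T + D"] T D by auto
  have q_le: "\<forall>x\<in>{\<nu> * T..\<nu> * (T + D)}. bessel_q \<nu> x \<le> bessel_q \<nu> (\<nu> * (T + D))"
    using bessel_q_mono[OF \<nu>] T_pos by auto
  show "finite {x\<in>{\<nu> * T..\<nu> * (T + D)}. bessel_u \<nu> x = 0}"
    by (rule card_zeros_le(1)[OF T_pos M(1) q_le])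
  have "real (card {x\<in>{\<nu> * T..\<nu> * (T + D)}. bessel_u \<nu> x = 0})
      \<le> (\<nu> * D) * sqrt (bessel_q \<nu> (\<nu> * (T + D))) / pi + 1"
    using card_zeros_le(2)[OF T_pos M(1) q_le] by (simp add: algebra_simps)
  also have "\<dots> \<le> (\<nu> * D) * (debye_phase' (T + D) + 1 / (2 * \<nu>)) / pi + 1"
    using M(2) \<nu> D by (intro add_right_mono divide_right_mono mult_left_mono) auto
  also have "\<dots> = \<nu> / pi * (D * debye_phase' (T + D)) + D / (2 * pi) + 1"
    using \<nu> by (simp add: field_simps)
  finally show "real (card {x\<in>{\<nu> * T..\<nu> * (T + D)}. bessel_u \<nu> x = 0})
      \<le> \<nu> / pi * (D * debye_phase' (T + D)) + D / (2 * pi) + 1" .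
qed

lemma card_bessel_zeros_below_order:
  assumes \<nu>: "\<nu> \<ge> 1"
  shows "card (bessel_zeros \<nu> \<nu>) \<le> 2"
proof -
  interpret sturm_eq "bessel_u \<nu>" "bessel_u' \<nu>" "bessel_q \<nu>"
    using \<nu> by (intro sturm_eq_bessel) simp
  obtain e where "e > 0" and e: "\<And>x. 0 < x \<Longrightarrow> x \<le> e \<Longrightarrow> bessel_u \<nu> x > 0"
    using bessel_u_pos_near_0[of \<nu>] \<nu> by auto
  define a where "a = min e \<nu>"
  have a: "a > 0" "a \<le> \<nu>" "a \<le> e"
    using \<open>e > 0\<close> \<nu> by (auto simp: a_def)
  have "\<forall>x\<in>{a..\<nu>}. bessel_q \<nu> x \<le> 1 / (4 * \<nu>^2)"
    using bessel_q_mono[OF \<nu>, of _ \<nu>] a \<nu> by (force simp: bessel_q_def field_simps)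
  moreover have "1 / (4 * \<nu>^2) > 0"
    using \<nu> by simp
  ultimately have fin: "finite {x\<in>{a..\<nu>}. bessel_u \<nu> x = 0}"
    and card: "real (card {x\<in>{a..\<nu>}. bessel_u \<nu> x = 0}) \<le> (\<nu> - a) * sqrt (1 / (4 * \<nu>^2)) / pi + 1"
    using card_zeros_le[OF a(1,2)] by blast+
  have "(\<nu> - a) * sqrt (1 / (4 * \<nu>^2)) = (\<nu> - a) / (2 * \<nu>)"
    using \<nu> by (simp add: real_sqrt_divide real_sqrt_mult)
  also have "\<dots> \<le> 1"
    using a \<nu> by (simp add: divide_simps)
  finally have "(\<nu> - a) * sqrt (1 / (4 * \<nu>^2)) / pi \<le> 1"
    using pi_gt3 by (simp add: divide_simps)
  moreover have "bessel_zeros \<nu> \<nu> \<subseteq> {x\<in>{a..\<nu>}. bessel_u \<nu> x = 0}"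
    using e a \<nu> by (force simp: bessel_zeros_eq not_le)
  then have "card (bessel_zeros \<nu> \<nu>) \<le> card {x\<in>{a..\<nu>}. bessel_u \<nu> x = 0}"
    using fin by (rule card_mono[rotated])
  ultimately show ?thesis
    using card by linarith
qed

lemma card_bessel_zeros_ge_sum:
  assumes \<nu>: "\<nu> \<ge> 1" and H: "H > 1" and n: "n > 0"
  defines "D \<equiv> (H - 1) / real n"
  shows "\<nu> / pi * (\<Sum>i<n. D * debye_phase' (1 + real i * D)) - real n - 1
    \<le> real (card (bessel_zeros \<nu> (\<nu> * H)))"
proof -
  define t where "t i = 1 + real i * D" for i
  define P where "P i = {x\<in>{\<nu> * t i<..\<nu> * (t i + D)}. bessel_u \<nu> x = 0}" for i
  have D: "D > 0"
    using H n by (simp add: D_def)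
  have t: "t i \<ge> 1" "t (Suc i) = t i + D" for i
    using D by (simp_all add: t_def distrib_right)
  have t_mono: "t i \<le> t j" if "i \<le> j" for i j
    using D that by (simp add: t_def mult_right_mono)
  have "t n = H"
    using n by (simp add: t_def D_def)
  have fin: "finite (insert (\<nu> * H) (bessel_zeros \<nu> (\<nu> * H)))"
    using finite_bessel_zeros[OF \<nu>] by simp
  have P_sub: "P i \<subseteq> insert (\<nu> * H) (bessel_zeros \<nu> (\<nu> * H))" if "i < n" for i
  proof
    fix x assume x: "x \<in> P i"
    have "\<nu> * (t i + D) \<le> \<nu> * H"
      using t(2)[of i] t_mono[of "Suc i" n] that \<open>t n = H\<close> \<nu> by simp
    then have "x \<le> \<nu> * H"
      using x by (simp add: P_def)
    moreover have "0 < \<nu> * t i"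
      using t \<nu> by (simp add: less_le_trans[OF zero_less_one])
    ultimately show "x \<in> insert (\<nu> * H) (bessel_zeros \<nu> (\<nu> * H))"
      using x \<nu> by (auto simp: P_def bessel_zeros_eq)
  qed
  have disjoint: "P i \<inter> P j = {}" if "i < j" for i j
  proof -
    have "\<nu> * (t i + D) \<le> \<nu> * t j"
      using t(2)[of i] t_mono[of "Suc i" j] that \<nu> by simp
    then show ?thesis
      by (auto simp: P_def)
  qed
  then have disjoint': "P i \<inter> P j = {}" if "i \<noteq> j" for i j
    using that by (metis Int_commute linorder_neqE_nat)
  have "(\<Sum>i<n. \<nu> / pi * (D * debye_phase' (t i)) - 1) \<le> (\<Sum>i<n. real (card (P i)))"
    unfolding P_def using card_bessel_u_zeros_ge[OF \<nu> t(1) less_imp_le[OF D]] by (intro sum_mono)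
  also have "\<dots> = real (card (\<Union>i<n. P i))"
    using P_sub finite_subset[OF _ fin] disjoint' by (subst card_UN_disjoint) auto
  also have "\<dots> \<le> real (card (insert (\<nu> * H) (bessel_zeros \<nu> (\<nu> * H))))"
    using P_sub by (intro of_nat_mono card_mono[OF fin]) auto
  also have "\<dots> \<le> real (card (bessel_zeros \<nu> (\<nu> * H))) + 1"
    using finite_bessel_zeros[OF \<nu>] by (simp add: card_insert_if)
  finally show ?thesis
    by (simp add: t_def sum_subtractf sum_distrib_left)
qed

lemma card_bessel_zeros_le_sum:
  assumes \<nu>: "\<nu> \<ge> 1" and H: "H > 1" and n: "n > 0"
  defines "D \<equiv> (H - 1) / real n"
  shows "real (card (bessel_zeros \<nu> (\<nu> * H)))
    \<le> \<nu> / pi * (\<Sum>i<n. D * debye_phase' (1 + real (Suc i) * D)) + (H - 1) / (2 * pi) + real n + 2"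
proof -
  define t where "t i = 1 + real i * D" for i
  define Q where "Q i = {x\<in>{\<nu> * t i..\<nu> * (t i + D)}. bessel_u \<nu> x = 0}" for i
  have D: "D > 0"
    using H n by (simp add: D_def)
  have t: "t i \<ge> 1" "t (Suc i) = t i + D" for i
    using D by (simp_all add: t_def distrib_right)
  note Q = card_bessel_u_zeros_le[OF \<nu> t(1) less_imp_le[OF D], folded Q_def]
  have cover: "bessel_zeros \<nu> (\<nu> * H) \<subseteq> bessel_zeros \<nu> \<nu> \<union> (\<Union>i<n. Q i)"
  proof
    fix y assume "y \<in> bessel_zeros \<nu> (\<nu> * H)"
    then have y: "0 < y" "y < \<nu> * H" "bessel_u \<nu> y = 0"
      using \<nu> by (auto simp: bessel_zeros_eq)
    show "y \<in> bessel_zeros \<nu> \<nu> \<union> (\<Union>i<n. Q i)"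
    proof (cases "y < \<nu>")
      case True
      then show ?thesis
        using y \<nu> by (auto simp: bessel_zeros_eq)
    next
      case False
      define i where "i = nat \<lfloor>(y / \<nu> - 1) / D\<rfloor>"
      have "0 \<le> (y / \<nu> - 1) / D"
        using False \<nu> D by (simp add: field_simps)
      moreover have "(y / \<nu> - 1) / D < real n"
        using y \<nu> D H n by (simp add: D_def field_simps)
      ultimately have "i < n" "real i \<le> (y / \<nu> - 1) / D" "(y / \<nu> - 1) / D < real i + 1"
        unfolding i_def by linarith+
      then have "i < n" "t i \<le> y / \<nu>" "y / \<nu> \<le> t i + D"
        using D by (simp_all add: t_def field_simps)
      then show ?thesis
        using \<nu> y by (auto simp: Q_def field_simps)
    qed
  qed
  have "card (bessel_zeros \<nu> (\<nu> * H)) \<le> card (bessel_zeros \<nu> \<nu> \<union> (\<Union>i<n. Q i))"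
    using cover finite_bessel_zeros[OF \<nu>] Q(1) by (intro card_mono) auto
  also have "\<dots> \<le> card (bessel_zeros \<nu> \<nu>) + card (\<Union>i<n. Q i)"
    by (rule card_Un_le)
  also have "\<dots> \<le> card (bessel_zeros \<nu> \<nu>) + (\<Sum>i<n. card (Q i))"
    by (intro add_left_mono card_UN_le) simp
  finally have "real (card (bessel_zeros \<nu> (\<nu> * H))) \<le> 2 + (\<Sum>i<n. real (card (Q i)))"
    using card_bessel_zeros_below_order[OF \<nu>] by (simp flip: of_nat_sum)
  also have "\<dots> \<le> 2 + (\<Sum>i<n. \<nu> / pi * (D * debye_phase' (t i + D)) + D / (2 * pi) + 1)"
    using Q(2) by (intro add_left_mono sum_mono) auto
  also have "\<dots> = \<nu> / pi * (\<Sum>i<n. D * debye_phase' (t (Suc i))) + real n * D / (2 * pi) + real n + 2"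
    by (simp add: t sum.distrib sum_distrib_left)
  also have "real n * D = H - 1"
    using n by (simp add: D_def)
  finally show ?thesis
    by (simp add: t_def)
qed

section \<open>Asymptotics of \<open>j\<^sub>\<nu>\<^sub>,\<^sub>k / \<nu>\<close>\<close>

lemma card_bessel_zeros_asymptotics:
  assumes H: "H > 1"
  shows "((\<lambda>\<nu>. real (card (bessel_zeros \<nu> (\<nu> * H))) / \<nu>) \<longlongrightarrow> debye_phase H / pi) at_top"
proof (rule tendstoI)
  fix \<epsilon> :: real assume "\<epsilon> > 0"
  define n where "n = nat \<lceil>4 * (H - 1) / (pi * \<epsilon>)\<rceil> + 1"
  let ?D = "(H - 1) / real n"
  define C where "C = (H - 1) / (2 * pi) + real n + 2"
  have n: "n > 0"
    by (simp add: n_def)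
  have "4 * (H - 1) / (pi * \<epsilon>) \<le> real n"
    unfolding n_def by linarith
  then have "?D \<le> pi * \<epsilon> / 4"
    using n \<open>\<epsilon> > 0\<close> by (simp add: field_simps)
  have C: "real n + 1 \<le> C"
    using H by (simp add: C_def)
  have "eventually (\<lambda>\<nu>. \<nu> \<ge> max 1 (4 * C / \<epsilon>)) at_top"
    by (rule eventually_ge_at_top)
  then show "eventually (\<lambda>\<nu>. dist (real (card (bessel_zeros \<nu> (\<nu> * H))) / \<nu>) (debye_phase H / pi) < \<epsilon>) at_top"
  proof eventually_elim
    case (elim \<nu>)
    then have \<nu>: "\<nu> \<ge> 1" and "C \<le> \<nu> * \<epsilon> / 4"
      using \<open>\<epsilon> > 0\<close> by (auto simp: field_simps)
    let ?N = "real (card (bessel_zeros \<nu> (\<nu> * H)))"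
    have "\<nu> / pi * ?D \<le> \<nu> * \<epsilon> / 4"
      using \<open>?D \<le> pi * \<epsilon> / 4\<close> \<nu> mult_left_mono[of ?D "pi * \<epsilon> / 4" "\<nu> / pi"] by simp
    moreover have "\<nu> / pi * (debye_phase H - ?D) \<le> \<nu> / pi * (\<Sum>i<n. ?D * debye_phase' (1 + real i * ?D))"
      using debye_phase_riemann_sums(1)[OF n, of H] H \<nu> by (intro mult_left_mono) auto
    moreover have "\<nu> / pi * (\<Sum>i<n. ?D * debye_phase' (1 + real (Suc i) * ?D)) \<le> \<nu> / pi * (debye_phase H + ?D)"
      using debye_phase_riemann_sums(2)[OF n, of H] H \<nu> by (intro mult_left_mono) auto
    moreover have "\<nu> / pi * (debye_phase H - ?D) = \<nu> * (debye_phase H / pi) - \<nu> / pi * ?D"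
      by (simp add: algebra_simps diff_divide_distrib add_divide_distrib)
    moreover have "\<nu> / pi * (debye_phase H + ?D) = \<nu> * (debye_phase H / pi) + \<nu> / pi * ?D"
      by (simp add: algebra_simps diff_divide_distrib add_divide_distrib)
    moreover note card_bessel_zeros_ge_sum[OF \<nu> H n]
      card_bessel_zeros_le_sum[OF \<nu> H n]
    ultimately have "?N - \<nu> * (debye_phase H / pi) \<le> \<nu> * \<epsilon> / 2"
      and "\<nu> * (debye_phase H / pi) - ?N \<le> \<nu> * \<epsilon> / 2"
      using C \<open>C \<le> \<nu> * \<epsilon> / 4\<close> unfolding C_def by linarith+
    then have "\<bar>?N - \<nu> * (debye_phase H / pi)\<bar> \<le> \<nu> * \<epsilon> / 2"
      by (intro abs_leI) linarith+
    then have "\<bar>real (card (bessel_zeros \<nu> (\<nu> * H))) / \<nu> - debye_phase H / pi\<bar> \<le> \<epsilon> / 2"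
      using \<nu> by (simp add: field_simps abs_divide flip: abs_mult)
    then show ?case
      using \<open>\<epsilon> > 0\<close> by (simp add: dist_real_def)
  qed
qed

lemma bessel_zero_ratio_tendsto:
  fixes V :: "nat \<Rightarrow> real" and k :: "nat \<Rightarrow> nat"
  assumes V: "filterlim V at_top sequentially" and k: "\<forall>n. k n \<ge> 1"
    and ratio: "(\<lambda>n. real (k n) / V n) \<longlonglongrightarrow> debye_phase h / pi" and h: "h > 1"
  shows "(\<lambda>n. bessel_zero (V n) (k n) / V n) \<longlonglongrightarrow> h"
proof (rule tendstoI)
  fix e :: real assume "e > 0"
  define \<delta> where "\<delta> = min e (h - 1) / 2"
  have \<delta>: "0 < \<delta>" "\<delta> < e" "1 < h - \<delta>"
    using \<open>e > 0\<close> h by (auto simp: \<delta>_def min_def field_simps)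
  let ?N = "\<lambda>H n. real (card (bessel_zeros (V n) (V n * H))) / V n"
  have N: "?N H \<longlonglongrightarrow> debye_phase H / pi" if "H > 1" for H
    using filterlim_compose[OF card_bessel_zeros_asymptotics[OF that] V] .
  have "debye_phase (h - \<delta>) < debye_phase h" "debye_phase h < debye_phase (h + \<delta>)"
    using \<delta> by (auto intro: debye_phase_strict_mono)
  then have pos: "0 < debye_phase (h + \<delta>) / pi - debye_phase h / pi"
    "0 < debye_phase h / pi - debye_phase (h - \<delta>) / pi"
    by (simp_all add: divide_strict_right_mono)
  have lim_upper: "(\<lambda>n. ?N (h + \<delta>) n - real (k n) / V n)
      \<longlonglongrightarrow> debye_phase (h + \<delta>) / pi - debye_phase h / pi"
    using \<delta> by (intro tendsto_diff N ratio) simp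
  have lim_lower: "(\<lambda>n. real (k n) / V n - ?N (h - \<delta>) n)
      \<longlonglongrightarrow> debye_phase h / pi - debye_phase (h - \<delta>) / pi"
    using \<delta> by (intro tendsto_diff N ratio) simp
  have "eventually (\<lambda>n. 0 < ?N (h + \<delta>) n - real (k n) / V n) sequentially"
    and "eventually (\<lambda>n. 0 < real (k n) / V n - ?N (h - \<delta>) n) sequentially"
    using order_tendstoD(1)[OF lim_upper pos(1)] order_tendstoD(1)[OF lim_lower pos(2)] .
  moreover have "eventually (\<lambda>n. V n \<ge> 1) sequentially"
    using V by (simp add: filterlim_at_top)
  ultimately show "eventually (\<lambda>n. dist (bessel_zero (V n) (k n) / V n) h < e) sequentially"
  proof eventually_elim
    case (elim n)
    then have "k n \<le> card (bessel_zeros (V n) (V n * (h + \<delta>)))"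
      and "card (bessel_zeros (V n) (V n * (h - \<delta>))) < k n"
      by (simp_all add: divide_less_cancel)
    then have "bessel_zero (V n) (k n) < V n * (h + \<delta>)"
      and "V n * (h - \<delta>) \<le> bessel_zero (V n) (k n)"
      using k elim(3) by (auto intro: bessel_zero_less bessel_zero_ge)
    then have "\<bar>bessel_zero (V n) (k n) / V n - h\<bar> \<le> \<delta>"
      using elim(3) by (simp add: abs_le_iff field_simps)
    then show ?case
      using \<delta> by (simp add: dist_real_def)
  qed
qed

lemma tendsto_inverse_ratio_shifted:
  fixes x y z :: "nat \<Rightarrow> real"
  assumes xy: "(\<lambda>n. x n / y n) \<longlonglongrightarrow> w" and "w \<noteq> 0"
    and y: "filterlim y at_top sequentially" and B: "\<And>n. \<bar>z n - x n\<bar> \<le> B"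
  shows "(\<lambda>n. y n / z n) \<longlonglongrightarrow> 1 / w"
proof -
  have "eventually (\<lambda>n. y n \<ge> 1) sequentially"
    using y by (simp add: filterlim_at_top)
  then have "eventually (\<lambda>n. norm ((z n - x n) / y n) \<le> B / y n) sequentially"
    by eventually_elim (simp add: abs_divide divide_right_mono B)
  moreover have "(\<lambda>n. B / y n) \<longlonglongrightarrow> 0"
    using filterlim_at_top_imp_at_infinity[OF y] by (rule tendsto_divide_0[OF tendsto_const])
  ultimately have "(\<lambda>n. (z n - x n) / y n) \<longlonglongrightarrow> 0"
    by (rule Lim_null_comparison)
  then have "(\<lambda>n. x n / y n + (z n - x n) / y n) \<longlonglongrightarrow> w + 0"
    by (intro tendsto_add xy)
  then have "(\<lambda>n. z n / y n) \<longlonglongrightarrow> w"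
    by (simp add: diff_divide_distrib)
  then have "(\<lambda>n. inverse (z n / y n)) \<longlonglongrightarrow> inverse w"
    using \<open>w \<noteq> 0\<close> by (rule tendsto_inverse)
  then show ?thesis
    by (simp add: inverse_eq_divide)
qed

lemma sqrt_shifted_sum_squares_bounds:
  fixes x a c :: real
  assumes "x \<ge> 0" "a \<ge> 0" "c \<ge> 0"
  shows "x \<le> sqrt ((x + a)^2 + c^2)" and "sqrt ((x + a)^2 + c^2) \<le> x + a + c"
proof -
  have "x + a \<le> sqrt ((x + a)^2 + c^2)"
    using real_sqrt_ge_abs1[of "x + a" "c^2"] by simp
  then show "x \<le> sqrt ((x + a)^2 + c^2)"
    using assms by linarith
  have "(x + a)^2 + c^2 \<le> (x + a + c)^2"
    using assms by (simp add: power2_sum)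
  then show "sqrt ((x + a)^2 + c^2) \<le> x + a + c"
    using assms by (intro real_le_lsqrt) auto
qed

theorem lemma2p1:
  fixes d :: nat and c :: real and nu :: "nat \<Rightarrow> real"
  assumes "d \<ge> 2" and "c \<ge> 0"
    and "\<And>l. nu l = sqrt ((real l + real d / 2 - 1)^2 + c^2)"
  shows "(\<forall>w>0. \<exists>!h. h > 1 \<and> sqrt (h^2 - 1) - arcsec h = pi / w)
    \<and> (\<forall>w>0. \<forall>(l :: nat \<Rightarrow> nat) (k :: nat \<Rightarrow> nat).
          (\<forall>n. k n \<ge> 1) \<and> filterlim l at_top sequentially \<and> filterlim k at_top sequentially
          \<and> ((\<lambda>n. real (l n) / real (k n)) \<longlonglongrightarrow> w)
          \<longrightarrow> ((\<lambda>n. bessel_zero (nu (l n)) (k n) / nu (l n)) \<longlonglongrightarrow>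
                 (THE h. h > 1 \<and> sqrt (h^2 - 1) - arcsec h = pi / w)))"
proof -
  have ex1: "\<exists>!h. h > 1 \<and> sqrt (h^2 - 1) - arcsec h = pi / w" if "w > 0" for w
    using ex1_debye_phase_eq[of "pi / w"] that by (simp add: debye_phase_def)
  have nu: "real m \<le> nu m" "\<bar>nu m - real m\<bar> \<le> real d / 2 - 1 + c" for m
    using sqrt_shifted_sum_squares_bounds[of "real m" "real d / 2 - 1" c] assms
    by (simp_all add: add_diff_eq)
  show ?thesis
  proof (intro conjI allI impI)
    fix w :: real assume "w > 0"
    then show "\<exists>!h. h > 1 \<and> sqrt (h^2 - 1) - arcsec h = pi / w"
      by (rule ex1)
  next
    fix w :: real and l k :: "nat \<Rightarrow> nat"
    assume "w > 0" and lk: "(\<forall>n. k n \<ge> 1) \<and> filterlim l at_top sequentially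
      \<and> filterlim k at_top sequentially \<and> ((\<lambda>n. real (l n) / real (k n)) \<longlonglongrightarrow> w)"
    define h where "h = (THE h. h > 1 \<and> sqrt (h^2 - 1) - arcsec h = pi / w)"
    have h: "h > 1" "debye_phase h / pi = 1 / w"
      using theI'[OF ex1[OF \<open>w > 0\<close>]] by (simp_all add: h_def debye_phase_def)
    have l: "filterlim (\<lambda>n. real (l n)) at_top sequentially"
      and k: "filterlim (\<lambda>n. real (k n)) at_top sequentially"
      using lk by (auto intro: filterlim_compose[OF filterlim_real_sequentially])
    have "filterlim (\<lambda>n. nu (l n)) at_top sequentially"
      using nu(1) by (intro filterlim_at_top_mono[OF l]) auto
    moreover have "(\<lambda>n. real (k n) / nu (l n)) \<longlonglongrightarrow> debye_phase h / pi"
      unfolding h(2) using lk \<open>w > 0\<close> by (intro tendsto_inverse_ratio_shifted[OF _ _ k nu(2)]) auto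
    ultimately show "(\<lambda>n. bessel_zero (nu (l n)) (k n) / nu (l n)) \<longlonglongrightarrow> h"
      using lk h(1) by (intro bessel_zero_ratio_tendsto) auto
  qed
qed

end
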